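(* Let $n\ge 2$, $k\ge 1$, $M_1\in\mathbb N^+$ and $\mathbf C=(c_0,\dots,c_k)\in\{0,1\}^{k+1}$, and let $\gamma$ be Euler's constant. Let $P(O_{\mathbf C}(n,m+c_k-1))=O_{\mathbf C}(n,m+c_k-1)/n!^k$. (i) If $c_0=0$ and $M=\left\lceil ekc_1(\log(n-1)+\gamma)+\frac{e\pi^2}{6}\sum_{\beta=2}^k c_\beta\binom{k}{\beta}\right\rceil+M_1$, then $$\sum_{m=M+1}^{n}P(O_{\mathbf C}(n,m+c_k-1))\le \exp(-M_1).$$ (ii) If $c_0=1$ and $M'=\left\lceil ekc'_1(\log(n-1)+\gamma)+\frac{e\pi^2}{6}\sum_{\beta=2}^k c'_\beta\binom{k}{\beta}\right\rceil+M_1$, then $$\sum_{1\le m< n+1-M'}P(O_{\mathbf C}(n,m+c_k-1))\le \exp(-M_1).$$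
   Context: Fix integers $k\ge 1$, $n\ge 1$ and $\mathbf C=(c_0,\dots,c_k)\in\{0,1\}^{k+1}$; put $\mathbf C'=(1,\dots,1)-\mathbf C=(c'_0,\dots,c'_k)$. Consider $k$-tuples $(\pi_1,\dots,\pi_k)$ of permutations of $\{1,\dots,n\}$ (there are $n!^k$). A position $\alpha$ is a record of a permutation $\pi$ if $\pi(\alpha)<\pi(\alpha')$ for every $\alpha'<\alpha$ (position $1$ is always a record); equivalently records index the minimal elements of the points $(\alpha,\pi(\alpha))$ under strict componentwise domination. For a tuple, let $l_\alpha$ be the number of $\beta\in\{1,\dots,k\}$ for which $\alpha$ is a record of $\pi_\beta$. The $\mathbf C$ sequential optimization set of the tuple is $S=\{\alpha:c_{l_\alpha}=1\}$, with weight $|S|$. For an integer $m$, $O_{\mathbf C}(n,m)$ is the number of $k$-tuples whose weight equals $m$. Thus $\sum_{m>M}P(O_{\mathbf C}(n,m+c_k-1))$ is the probability that a uniformly random $k$-tuple has weight $>M+c_k-1$. $\log$ is the natural logarithm. *)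

theory Defs
  imports "HOL-Analysis.Analysis" "HOL-Combinatorics.Permutations"
begin

definition is_record :: "(nat \<Rightarrow> nat) \<Rightarrow> nat \<Rightarrow> bool" where
  "is_record p a \<longleftrightarrow> (\<forall>a'. 1 \<le> a' \<and> a' < a \<longrightarrow> p a < p a')"

definition perm_tuples :: "nat \<Rightarrow> nat \<Rightarrow> (nat \<Rightarrow> nat \<Rightarrow> nat) set" where
  "perm_tuples k n = (\<Pi>\<^sub>E \<beta>\<in>{1..k}. {p. p permutes {1..n}})"

definition rec_count :: "nat \<Rightarrow> (nat \<Rightarrow> nat \<Rightarrow> nat) \<Rightarrow> nat \<Rightarrow> nat" where
  "rec_count k \<pi> a = card {\<beta>\<in>{1..k}. is_record (\<pi> \<beta>) a}"

definition seq_opt_set :: "(nat \<Rightarrow> nat) \<Rightarrow> nat \<Rightarrow> nat \<Rightarrow> (nat \<Rightarrow> nat \<Rightarrow> nat) \<Rightarrow> nat set" where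
  "seq_opt_set c k n \<pi> = {a\<in>{1..n}. c (rec_count k \<pi> a) = 1}"

definition weight :: "(nat \<Rightarrow> nat) \<Rightarrow> nat \<Rightarrow> nat \<Rightarrow> (nat \<Rightarrow> nat \<Rightarrow> nat) \<Rightarrow> nat" where
  "weight c k n \<pi> = card (seq_opt_set c k n \<pi>)"

definition O_C :: "(nat \<Rightarrow> nat) \<Rightarrow> nat \<Rightarrow> nat \<Rightarrow> int \<Rightarrow> nat" where
  "O_C c k n m = card {\<pi>\<in>perm_tuples k n. int (weight c k n \<pi>) = m}"

definition P_O :: "(nat \<Rightarrow> nat) \<Rightarrow> nat \<Rightarrow> nat \<Rightarrow> int \<Rightarrow> real" where
  "P_O c k n m = real (O_C c k n m) / real (fact n) ^ k"

end

theory Submission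
  imports Defs
begin

text \<open>
  Deleting the last position of a permutation of \<open>{1..m+1}\<close> and relabelling the remaining
  values order-preservingly is a bijection onto (last value) \<open>\<times>\<close> (permutations of
  \<open>{1..m}\<close>); it keeps the records at positions \<open>\<le> m\<close>, and \<open>m+1\<close> is a record iff its
  value is 1. Hence for a uniform \<open>k\<close>-tuple the record counts \<open>l\<^sub>2, \<dots>, l\<^sub>n\<close> are
  independent, \<open>l\<^sub>\<alpha>\<close> being the number of coordinates equal to 1 of a uniform vector in
  \<open>{1..\<alpha>}\<^sup>k\<close>. For \<open>Z\<close> the number of \<open>\<alpha> \<ge> 2\<close> with \<open>d(l\<^sub>\<alpha>) = 1\<close>, \<open>E[e\<^sup>Z]\<close> therefore
  factorises, each factor being at most \<open>exp((e-1) \<Sum>\<^sub>j d\<^sub>j C(k,j) / \<alpha>\<^sup>j)\<close> by a union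
  bound. Summing over \<open>\<alpha>\<close> with \<open>\<Sum> 1/\<alpha> \<le> ln(n-1) + \<gamma>\<close> and \<open>\<Sum> 1/\<alpha>\<^sup>j \<le> 1 \<le> \<pi>\<^sup>2/6\<close>
  and applying Markov's inequality to \<open>e\<^sup>Z\<close> bounds the probability of \<open>Z \<ge> M\<close>. The weight
  is \<open>c\<^sub>k + Z\<close> for \<open>d = C\<close>; when \<open>c\<^sub>0 = 1\<close>, small weight means large \<open>Z\<close> for \<open>d = C'\<close>.
\<close>

definition std_prefix :: "(nat \<Rightarrow> nat) \<Rightarrow> nat \<Rightarrow> nat \<Rightarrow> nat" where
  "std_prefix p m a = (if a \<in> {1..m} then (if p a < p (Suc m) then p a else p a - 1) else a)"

lemma permutes_prefix_value:
  assumes p: "p permutes {1..Suc m}" and a: "a \<in> {1..m}"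
  shows "p a \<in> {1..Suc m} - {p (Suc m)}"
  using permutes_in_image[OF p, of a] inj_eq[OF permutes_inj[OF p], of a "Suc m"] a by auto

lemma std_prefix_permutes:
  assumes p: "p permutes {1..Suc m}"
  shows "std_prefix p m permutes {1..m}"
proof -
  let ?f = "std_prefix p m"
  have last: "p (Suc m) \<in> {1..Suc m}" using permutes_in_image[OF p] by simp
  have into: "?f ` {1..m} \<subseteq> {1..m}"
    using permutes_prefix_value[OF p] last by (force simp: std_prefix_def)
  have "inj_on ?f {1..m}"
  proof
    fix a b assume ab: "a \<in> {1..m}" "b \<in> {1..m}" and "?f a = ?f b"
    with permutes_prefix_value[OF p ab(1)] permutes_prefix_value[OF p ab(2)]
    have "p a = p b"
      by (auto simp: std_prefix_def split: if_splits)
    then show "a = b" using permutes_inj[OF p] by (auto dest: injD)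
  qed
  with into have "bij_betw ?f {1..m} {1..m}"
    by (simp add: bij_betw_def endo_inj_surj)
  then show ?thesis by (rule bij_imp_permutes) (auto simp: std_prefix_def)
qed

lemma is_record_std_prefix_iff:
  assumes p: "p permutes {1..Suc m}" and a: "a \<le> m"
  shows "is_record (std_prefix p m) a \<longleftrightarrow> is_record p a"
proof -
  have "std_prefix p m a < std_prefix p m a' \<longleftrightarrow> p a < p a'" if "1 \<le> a'" "a' < a" for a'
    using permutes_prefix_value[OF p, of a] permutes_prefix_value[OF p, of a'] that a
    by (auto simp: std_prefix_def)
  then show ?thesis unfolding is_record_def by auto
qed

lemma is_record_last_iff:
  assumes p: "p permutes {1..Suc m}"
  shows "is_record p (Suc m) \<longleftrightarrow> p (Suc m) = 1"
proof
  assume last_record: "is_record p (Suc m)"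
  have "1 \<in> p ` {1..Suc m}" using permutes_image[OF p] by simp
  then obtain a where a: "a \<in> {1..Suc m}" "p a = 1" by auto
  show "p (Suc m) = 1"
  proof (rule ccontr)
    assume "p (Suc m) \<noteq> 1"
    with a have "a < Suc m" by (auto simp: le_less)
    with last_record a have "p (Suc m) < 1" by (auto simp: is_record_def)
    then show False using permutes_in_image[OF p, of "Suc m"] by simp
  qed
next
  assume "p (Suc m) = 1"
  then show "is_record p (Suc m)"
    using permutes_prefix_value[OF p] by (force simp: is_record_def)
qed

lemma std_prefix_inj:
  assumes p: "p permutes {1..Suc m}" and q: "q permutes {1..Suc m}"
    and last: "p (Suc m) = q (Suc m)" and prefix: "std_prefix p m = std_prefix q m"
  shows "p = q"
proof
  fix a
  consider "a \<in> {1..m}" | "a = Suc m" | "a \<notin> {1..Suc m}" by fastforce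
  then show "p a = q a"
  proof cases
    case 1
    with permutes_prefix_value[OF p 1] permutes_prefix_value[OF q 1] last
      fun_cong[OF prefix, of a]
    show ?thesis by (auto simp: std_prefix_def split: if_splits)
  next
    case 2
    with last show ?thesis by simp
  next
    case 3
    then show ?thesis using permutes_not_in[OF p] permutes_not_in[OF q] by metis
  qed
qed

lemma finite_perm_tuples: "finite (perm_tuples k n)"
  unfolding perm_tuples_def by (intro finite_PiE) (auto simp: finite_permutations)

lemma card_perm_tuples: "card (perm_tuples k n) = fact n ^ k"
  unfolding perm_tuples_def by (simp add: card_PiE card_permutations)

lemma perm_tuples_permutes: "P \<in> perm_tuples k n \<Longrightarrow> \<beta> \<in> {1..k} \<Longrightarrow> P \<beta> permutes {1..n}"
  unfolding perm_tuples_def by auto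

lemma card_filter_atLeastAtMost_le: "card {\<beta>\<in>{1..k}. P \<beta>} \<le> k"
proof -
  have "card {\<beta>\<in>{1..k}. P \<beta>} \<le> card {1..k}" by (rule card_mono) auto
  then show ?thesis by simp
qed

lemma rec_count_first: "rec_count k P 1 = k"
proof -
  have "{\<beta>\<in>{1..k}. is_record (P \<beta>) 1} = {1..k}" by (auto simp: is_record_def)
  then show ?thesis unfolding rec_count_def by simp
qed

lemma rec_count_le: "rec_count k P \<alpha> \<le> k"
  unfolding rec_count_def by (rule card_filter_atLeastAtMost_le)

definition split_last :: "nat \<Rightarrow> nat \<Rightarrow> (nat \<Rightarrow> nat \<Rightarrow> nat) \<Rightarrow> (nat \<Rightarrow> nat) \<times> (nat \<Rightarrow> nat \<Rightarrow> nat)" where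
  "split_last k m P = (\<lambda>\<beta>\<in>{1..k}. P \<beta> (Suc m), \<lambda>\<beta>\<in>{1..k}. std_prefix (P \<beta>) m)"

lemma bij_betw_split_last:
  "bij_betw (split_last k m) (perm_tuples k (Suc m)) (({1..k} \<rightarrow>\<^sub>E {1..Suc m}) \<times> perm_tuples k m)"
proof -
  let ?T = "({1..k} \<rightarrow>\<^sub>E {1..Suc m}) \<times> perm_tuples k m"
  have inj: "inj_on (split_last k m) (perm_tuples k (Suc m))"
  proof
    fix P Q assume P: "P \<in> perm_tuples k (Suc m)" and Q: "Q \<in> perm_tuples k (Suc m)"
      and eq: "split_last k m P = split_last k m Q"
    show "P = Q"
    proof (rule PiE_ext[OF P[unfolded perm_tuples_def] Q[unfolded perm_tuples_def]])
      fix \<beta> assume \<beta>: "\<beta> \<in> {1..k}"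
      from eq \<beta> have "P \<beta> (Suc m) = Q \<beta> (Suc m)" "std_prefix (P \<beta>) m = std_prefix (Q \<beta>) m"
        by (auto simp: split_last_def dest: fun_cong[of _ _ \<beta>])
      with \<beta> show "P \<beta> = Q \<beta>"
        using std_prefix_inj perm_tuples_permutes[OF P] perm_tuples_permutes[OF Q] by blast
    qed
  qed
  have into: "split_last k m ` perm_tuples k (Suc m) \<subseteq> ?T"
    using perm_tuples_permutes permutes_in_image std_prefix_permutes
    by (fastforce simp: split_last_def perm_tuples_def)
  have "card (split_last k m ` perm_tuples k (Suc m)) = card ?T"
    by (simp add: card_image[OF inj] card_perm_tuples card_cartesian_product card_PiE
        power_mult_distrib[symmetric])
  with into have "split_last k m ` perm_tuples k (Suc m) = ?T"
    using finite_perm_tuples by (intro card_subset_eq) (auto intro!: finite_PiE)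
  with inj show ?thesis by (simp add: bij_betw_def)
qed

lemma rec_count_split_last_prefix:
  assumes "P \<in> perm_tuples k (Suc m)" and "\<alpha> \<le> m"
  shows "rec_count k (snd (split_last k m P)) \<alpha> = rec_count k P \<alpha>"
  unfolding rec_count_def split_last_def
  using is_record_std_prefix_iff[OF perm_tuples_permutes[OF assms(1)] assms(2)]
  by (intro arg_cong[where f = card] Collect_cong) auto

lemma rec_count_split_last_last:
  assumes "P \<in> perm_tuples k (Suc m)"
  shows "rec_count k P (Suc m) = card {\<beta>\<in>{1..k}. fst (split_last k m P) \<beta> = 1}"
  unfolding rec_count_def split_last_def
  using is_record_last_iff[OF perm_tuples_permutes[OF assms]]
  by (intro arg_cong[where f = card] Collect_cong) auto

lemma sum_prod_rec_count_eq:
  fixes h :: "nat \<Rightarrow> 'a::comm_semiring_1"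
  assumes "n \<ge> 1"
  shows "(\<Sum>P\<in>perm_tuples k n. \<Prod>\<alpha>\<in>{2..n}. h (rec_count k P \<alpha>))
       = (\<Prod>\<alpha>\<in>{2..n}. \<Sum>v\<in>{1..k} \<rightarrow>\<^sub>E {1..\<alpha>}. h (card {\<beta>\<in>{1..k}. v \<beta> = 1}))"
  using assms
proof (induction n rule: nat_induct_at_least)
  case base
  show ?case by (simp add: card_perm_tuples)
next
  case (Suc m)
  let ?V = "{1..k} \<rightarrow>\<^sub>E {1..Suc m}"
  let ?H = "\<lambda>v. h (card {\<beta>\<in>{1..k}. v \<beta> = 1})"
  let ?F = "\<lambda>Q. \<Prod>\<alpha>\<in>{2..m}. h (rec_count k Q \<alpha>)"
  have insert_last: "{2..Suc m} = insert (Suc m) {2..m}" using Suc.hyps by auto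
  have "(\<Prod>\<alpha>\<in>{2..Suc m}. h (rec_count k P \<alpha>)) = ?H (fst (split_last k m P)) * ?F (snd (split_last k m P))"
    if P: "P \<in> perm_tuples k (Suc m)" for P
  proof -
    have "(\<Prod>\<alpha>\<in>{2..m}. h (rec_count k P \<alpha>)) = ?F (snd (split_last k m P))"
      using rec_count_split_last_prefix[OF P] by (intro prod.cong) auto
    then show ?thesis by (simp add: insert_last rec_count_split_last_last[OF P])
  qed
  then have "(\<Sum>P\<in>perm_tuples k (Suc m). \<Prod>\<alpha>\<in>{2..Suc m}. h (rec_count k P \<alpha>))
      = (\<Sum>P\<in>perm_tuples k (Suc m). (\<lambda>(v, Q). ?H v * ?F Q) (split_last k m P))"
    by (simp add: split_beta)
  also have "\<dots> = (\<Sum>(v, Q)\<in>?V \<times> perm_tuples k m. ?H v * ?F Q)"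
    by (rule sum.reindex_bij_betw[OF bij_betw_split_last])
  also have "\<dots> = (\<Sum>v\<in>?V. ?H v) * (\<Sum>Q\<in>perm_tuples k m. ?F Q)"
    by (simp add: sum_product sum.cartesian_product)
  also have "\<dots> = (\<Prod>\<alpha>\<in>{2..Suc m}. \<Sum>v\<in>{1..k} \<rightarrow>\<^sub>E {1..\<alpha>}. ?H v)"
    by (simp add: Suc.IH insert_last)
  finally show ?case .
qed

lemma card_PiE_fixed_ones:
  assumes S: "S \<subseteq> {1..k}" and \<alpha>: "\<alpha> \<ge> 1"
  shows "card {v\<in>{1..k} \<rightarrow>\<^sub>E {1..\<alpha>}. \<forall>\<beta>\<in>S. v \<beta> = 1} = \<alpha> ^ (k - card S)"
proof -
  have "{v\<in>{1..k} \<rightarrow>\<^sub>E {1..\<alpha>}. \<forall>\<beta>\<in>S. v \<beta> = 1} = (\<Pi>\<^sub>E \<beta>\<in>{1..k}. if \<beta> \<in> S then {1} else {1..\<alpha>})"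
  proof (intro set_eqI iffI)
    fix v assume "v \<in> {v\<in>{1..k} \<rightarrow>\<^sub>E {1..\<alpha>}. \<forall>\<beta>\<in>S. v \<beta> = 1}"
    then show "v \<in> (\<Pi>\<^sub>E \<beta>\<in>{1..k}. if \<beta> \<in> S then {1} else {1..\<alpha>})"
      by (auto simp: PiE_iff)
  next
    fix v assume v: "v \<in> (\<Pi>\<^sub>E \<beta>\<in>{1..k}. if \<beta> \<in> S then {1} else {1..\<alpha>})"
    then have "v \<beta> \<in> {1..\<alpha>}" if "\<beta> \<in> {1..k}" for \<beta>
      using PiE_mem[OF v that] \<alpha> by (auto split: if_splits)
    moreover have "v \<beta> = 1" if "\<beta> \<in> S" for \<beta>
      using PiE_mem[OF v, of \<beta>] that S by auto
    ultimately show "v \<in> {v\<in>{1..k} \<rightarrow>\<^sub>E {1..\<alpha>}. \<forall>\<beta>\<in>S. v \<beta> = 1}"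
      using v
      by (auto simp: PiE_iff)
  qed
  then have "card {v\<in>{1..k} \<rightarrow>\<^sub>E {1..\<alpha>}. \<forall>\<beta>\<in>S. v \<beta> = 1} = (\<Prod>\<beta>\<in>{1..k}. if \<beta> \<in> S then 1 else \<alpha>)"
    by (simp add: card_PiE) (intro prod.cong, auto)
  also have "\<dots> = \<alpha> ^ card ({1..k} - S)"
    by (simp add: prod.If_cases Diff_eq)
  also have "card ({1..k} - S) = k - card S"
    using S by (simp add: card_Diff_subset finite_subset)
  finally show ?thesis .
qed

lemma card_ones_count_mem_le:
  assumes J: "0 \<notin> J" and \<alpha>: "\<alpha> \<ge> 1"
  shows "card {v\<in>{1..k} \<rightarrow>\<^sub>E {1..\<alpha>}. card {\<beta>\<in>{1..k}. v \<beta> = 1} \<in> J}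
     \<le> (\<Sum>j\<in>J \<inter> {1..k}. (k choose j) * \<alpha> ^ (k - j))"
proof -
  let ?V = "{1..k} \<rightarrow>\<^sub>E {1..\<alpha>}"
  let ?ones = "\<lambda>v. {\<beta>\<in>{1..k}. v \<beta> = 1}"
  let ?W = "\<lambda>S. {v\<in>?V. \<forall>\<beta>\<in>S. v \<beta> = 1}"
  let ?subsets = "\<lambda>j. {S. S \<subseteq> {1..k} \<and> card S = j}"
  have cover: "{v\<in>?V. card (?ones v) \<in> J} \<subseteq> (\<Union>j\<in>J \<inter> {1..k}. \<Union>S\<in>?subsets j. ?W S)"
  proof
    fix v assume v: "v \<in> {v\<in>?V. card (?ones v) \<in> J}"
    then have "card (?ones v) \<in> J" by simp
    with J have "card (?ones v) \<noteq> 0" by metis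
    then have "1 \<le> card (?ones v)" by linarith
    with \<open>card (?ones v) \<in> J\<close> card_filter_atLeastAtMost_le[of k "\<lambda>\<beta>. v \<beta> = 1"]
    have "card (?ones v) \<in> J \<inter> {1..k}" by auto
    moreover have "?ones v \<in> ?subsets (card (?ones v))" "v \<in> ?W (?ones v)" using v by auto
    ultimately show "v \<in> (\<Union>j\<in>J \<inter> {1..k}. \<Union>S\<in>?subsets j. ?W S)" by blast
  qed
  have "finite ?V" by (intro finite_PiE) auto
  have subsets_finite: "finite (?subsets j)" for j
    by (rule finite_subset[of _ "Pow {1..k}"]) auto
  have sum_subsets: "(\<Sum>S\<in>?subsets j. card (?W S)) = (k choose j) * \<alpha> ^ (k - j)" for j
  proof -
    have "(\<Sum>S\<in>?subsets j. card (?W S)) = (\<Sum>S\<in>?subsets j. \<alpha> ^ (k - j))"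
      using card_PiE_fixed_ones[OF _ \<alpha>] by (intro sum.cong) auto
    then show ?thesis using n_subsets[of "{1..k}" j] by simp
  qed
  have "card {v\<in>?V. card (?ones v) \<in> J} \<le> card (\<Union>j\<in>J \<inter> {1..k}. \<Union>S\<in>?subsets j. ?W S)"
    by (rule card_mono[OF finite_subset[OF _ \<open>finite ?V\<close>] cover]) auto
  also have "\<dots> \<le> (\<Sum>j\<in>J \<inter> {1..k}. card (\<Union>S\<in>?subsets j. ?W S))"
    by (rule card_UN_le) simp
  also have "\<dots> \<le> (\<Sum>j\<in>J \<inter> {1..k}. \<Sum>S\<in>?subsets j. card (?W S))"
    by (intro sum_mono card_UN_le subsets_finite)
  also have "\<dots> = (\<Sum>j\<in>J \<inter> {1..k}. (k choose j) * \<alpha> ^ (k - j))"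
    by (simp only: sum_subsets)
  finally show ?thesis .
qed

lemma card_ones_count_hit_le:
  fixes d :: "nat \<Rightarrow> nat"
  assumes d0: "d 0 \<noteq> 1" and \<alpha>: "\<alpha> \<ge> 1"
  shows "real (card {v\<in>{1..k} \<rightarrow>\<^sub>E {1..\<alpha>}. d (card {\<beta>\<in>{1..k}. v \<beta> = 1}) = 1})
     \<le> (\<Sum>j=1..k. real (d j) * real (k choose j) * real \<alpha> ^ (k - j))"
proof -
  have "card {v\<in>{1..k} \<rightarrow>\<^sub>E {1..\<alpha>}. d (card {\<beta>\<in>{1..k}. v \<beta> = 1}) = 1}
      \<le> (\<Sum>j\<in>{j. d j = 1} \<inter> {1..k}. (k choose j) * \<alpha> ^ (k - j))"
    using card_ones_count_mem_le[of "{j. d j = 1}" \<alpha> k] d0 \<alpha> by simp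
  also have "\<dots> = (\<Sum>j=1..k. if d j = 1 then (k choose j) * \<alpha> ^ (k - j) else 0)"
    by (simp add: sum.If_cases Int_commute)
  finally have "real (card {v\<in>{1..k} \<rightarrow>\<^sub>E {1..\<alpha>}. d (card {\<beta>\<in>{1..k}. v \<beta> = 1}) = 1})
      \<le> real (\<Sum>j=1..k. if d j = 1 then (k choose j) * \<alpha> ^ (k - j) else 0)"
    by (simp only: of_nat_le_iff)
  also have "\<dots> \<le> (\<Sum>j=1..k. real (d j) * real (k choose j) * real \<alpha> ^ (k - j))"
    unfolding of_nat_sum by (intro sum_mono) auto
  finally show ?thesis .
qed

lemma sum_exp_of_bool_le:
  fixes d :: "nat \<Rightarrow> nat"
  assumes d0: "d 0 \<noteq> 1" and \<alpha>: "\<alpha> \<ge> 1"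
  shows "(\<Sum>v\<in>{1..k} \<rightarrow>\<^sub>E {1..\<alpha>}. exp (of_bool (d (card {\<beta>\<in>{1..k}. v \<beta> = 1}) = 1)))
     \<le> real \<alpha> ^ k * exp ((exp 1 - 1) * (\<Sum>j=1..k. real (d j) * real (k choose j) / real \<alpha> ^ j))"
proof -
  let ?V = "{1..k} \<rightarrow>\<^sub>E {1..\<alpha>}"
  let ?hit = "\<lambda>v. d (card {\<beta>\<in>{1..k}. v \<beta> = 1}) = 1"
  let ?q = "\<Sum>j=1..k. real (d j) * real (k choose j) / real \<alpha> ^ j"
  have "finite ?V" by (intro finite_PiE) auto
  have "(\<Sum>v\<in>?V. exp (of_bool (?hit v))) = (\<Sum>v\<in>?V. 1 + (exp 1 - 1) * of_bool (?hit v))"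
    by (intro sum.cong) auto
  also have "\<dots> = real \<alpha> ^ k + (exp 1 - 1) * real (card {v\<in>?V. ?hit v})"
    using \<open>finite ?V\<close> by (simp add: sum.distrib card_PiE Int_def flip: sum_distrib_left)
  also have "\<dots> \<le> real \<alpha> ^ k + (exp 1 - 1) * (\<Sum>j=1..k. real (d j) * real (k choose j) * real \<alpha> ^ (k - j))"
    using card_ones_count_hit_le[where d = d and \<alpha> = \<alpha> and k = k, OF d0 \<alpha>] by (intro add_left_mono mult_left_mono) auto
  also have "(\<Sum>j=1..k. real (d j) * real (k choose j) * real \<alpha> ^ (k - j)) = real \<alpha> ^ k * ?q"
    unfolding sum_distrib_left using \<alpha> by (intro sum.cong) (auto simp: power_diff)
  also have "real \<alpha> ^ k + (exp 1 - 1) * (real \<alpha> ^ k * ?q) = real \<alpha> ^ k * (1 + (exp 1 - 1) * ?q)"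
    by (simp add: algebra_simps)
  also have "\<dots> \<le> real \<alpha> ^ k * exp ((exp 1 - 1) * ?q)"
    by (intro mult_left_mono exp_ge_add_one_self) auto
  finally show ?thesis .
qed

lemma sum_inverse_le_ln_euler_mascheroni:
  assumes n: "n \<ge> 2"
  shows "(\<Sum>\<alpha>=2..n. 1 / real \<alpha>) \<le> ln (real n - 1) + euler_mascheroni"
proof -
  obtain m where m: "n = Suc m" "m \<ge> 1" using n by (cases n) auto
  have "harm m - ln (real m) \<le> harm 1 - ln (real 1)"
    using euler_mascheroni_sequence_decreasing[of 1 m] m by simp
  then have harm_m: "harm m \<le> ln (real m) + (1::real)" by (simp add: harm_def)
  have "1 + (\<Sum>\<alpha>=2..n. 1 / real \<alpha>) = (harm n :: real)"
    unfolding harm_def using sum.atLeast_Suc_atMost[of 1 n "\<lambda>k. inverse (real k)"] n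
    by (simp add: divide_inverse numeral_2_eq_2)
  also have "\<dots> = harm m + 1 / real n"
    using m by (simp add: harm_Suc divide_inverse)
  finally have "(\<Sum>\<alpha>=2..n. 1 / real \<alpha>) \<le> ln (real m) + 1 / real n"
    using harm_m by linarith
  moreover have "1 / real n \<le> 1 / 2" using n by (simp add: field_simps)
  moreover have "ln (real n - 1) = ln (real m)" using m by simp
  ultimately show ?thesis using euler_mascheroni_gt_19_over_33 by linarith
qed

lemma sum_inverse_squares_le:
  assumes "n \<ge> 1"
  shows "(\<Sum>\<alpha>=2..n. 1 / real \<alpha> ^ 2) \<le> 1 - 1 / real n"
  using assms
proof (induction n rule: nat_induct_at_least)
  case base
  then show ?case by simp
next
  case (Suc m)
  have "real m * real (Suc m) \<le> real (Suc m) ^ 2" by (simp add: power2_eq_square)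
  then have "1 / real (Suc m) ^ 2 \<le> 1 / (real m * real (Suc m))"
    using Suc.hyps by (intro divide_left_mono) auto
  also have "\<dots> = 1 / real m - 1 / real (Suc m)"
    using Suc.hyps by (simp add: field_simps)
  finally have "1 / real (Suc m) ^ 2 \<le> 1 / real m - 1 / real (Suc m)" .
  moreover have "{2..Suc m} = insert (Suc m) {2..m}" using Suc.hyps by auto
  ultimately show ?case using Suc.IH by simp
qed

lemma sum_inverse_powers_le_one:
  assumes j: "j \<ge> 2"
  shows "(\<Sum>\<alpha>=2..n. 1 / real \<alpha> ^ j) \<le> 1"
proof (cases "n = 0")
  case False
  have "(\<Sum>\<alpha>=2..n. 1 / real \<alpha> ^ j) \<le> (\<Sum>\<alpha>=2..n. 1 / real \<alpha> ^ 2)"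
    using j by (intro sum_mono divide_left_mono power_increasing) auto
  also have "\<dots> \<le> 1 - 1 / real n" using False by (intro sum_inverse_squares_le) simp
  also have "\<dots> \<le> 1" by simp
  finally show ?thesis .
qed simp

definition tail_weight :: "(nat \<Rightarrow> nat) \<Rightarrow> nat \<Rightarrow> nat \<Rightarrow> (nat \<Rightarrow> nat \<Rightarrow> nat) \<Rightarrow> nat" where
  "tail_weight d k n P = card {\<alpha>\<in>{2..n}. d (rec_count k P \<alpha>) = 1}"

definition tail_mean_bound :: "(nat \<Rightarrow> nat) \<Rightarrow> nat \<Rightarrow> nat \<Rightarrow> real" where
  "tail_mean_bound d k n = k * d 1 * (ln (real n - 1) + euler_mascheroni)
     + pi\<^sup>2 / 6 * (\<Sum>\<beta>=2..k. real (d \<beta>) * real (k choose \<beta>))"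

lemma tail_mean_bound_nonneg: "n \<ge> 2 \<Longrightarrow> tail_mean_bound d k n \<ge> 0"
  unfolding tail_mean_bound_def using euler_mascheroni_pos
  by (intro add_nonneg_nonneg mult_nonneg_nonneg sum_nonneg) auto

lemma sum_record_probabilities_le:
  assumes k: "k \<ge> 1" and n: "n \<ge> 2"
  shows "(\<Sum>\<alpha>=2..n. \<Sum>j=1..k. real (d j) * real (k choose j) / real \<alpha> ^ j) \<le> tail_mean_bound d k n"
proof -
  have "3\<^sup>2 \<le> pi\<^sup>2" using pi_gt3 by (intro power_mono) auto
  then have pi_sq: "1 \<le> pi\<^sup>2 / 6" by simp
  have "(\<Sum>\<alpha>=2..n. \<Sum>j=1..k. real (d j) * real (k choose j) / real \<alpha> ^ j)
      = (\<Sum>j=1..k. real (d j) * real (k choose j) * (\<Sum>\<alpha>=2..n. 1 / real \<alpha> ^ j))"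
    by (subst sum.swap) (simp add: sum_distrib_left)
  also have "\<dots> = real (d 1) * real k * (\<Sum>\<alpha>=2..n. 1 / real \<alpha>)
        + (\<Sum>j=2..k. real (d j) * real (k choose j) * (\<Sum>\<alpha>=2..n. 1 / real \<alpha> ^ j))"
    using k by (simp add: sum.atLeast_Suc_atMost numeral_2_eq_2)
  also have "\<dots> \<le> real (d 1) * real k * (ln (real n - 1) + euler_mascheroni)
        + (\<Sum>j=2..k. real (d j) * real (k choose j) * (pi\<^sup>2 / 6))"
    using sum_inverse_le_ln_euler_mascheroni[OF n] sum_inverse_powers_le_one pi_sq
    by (intro add_mono mult_left_mono sum_mono order_trans[OF _ pi_sq]) auto
  also have "\<dots> = tail_mean_bound d k n"
    unfolding tail_mean_bound_def by (simp add: sum_distrib_left sum_distrib_right mult_ac)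
  finally show ?thesis .
qed

lemma exp_tail_weight_eq_prod:
  "exp (real (tail_weight d k n P)) = (\<Prod>\<alpha>\<in>{2..n}. exp (of_bool (d (rec_count k P \<alpha>) = 1)))"
proof -
  have "real (tail_weight d k n P) = (\<Sum>\<alpha>\<in>{2..n}. of_bool (d (rec_count k P \<alpha>) = 1))"
    unfolding tail_weight_def by (simp add: Int_def)
  then show ?thesis by (simp add: exp_sum del: sum_of_bool_eq)
qed

lemma prod_power_eq_fact: "(\<Prod>\<alpha>\<in>{2..n}. real \<alpha> ^ k) = fact n ^ k"
proof -
  have "{1..n} = insert 1 {2..n}" if "n \<ge> 1" using that by auto
  then have "(\<Prod>\<alpha>\<in>{2..n}. real \<alpha>) = fact n"
    by (cases "n = 0") (simp_all add: fact_prod)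
  then show ?thesis by (simp flip: prod_power_distrib)
qed

lemma sum_exp_tail_weight_le:
  assumes d0: "d 0 \<noteq> 1" and k: "k \<ge> 1" and n: "n \<ge> 2"
  shows "(\<Sum>P\<in>perm_tuples k n. exp (real (tail_weight d k n P)))
    \<le> fact n ^ k * exp ((exp 1 - 1) * tail_mean_bound d k n)"
proof -
  let ?q = "\<lambda>\<alpha>::nat. \<Sum>j=1..k. real (d j) * real (k choose j) / real \<alpha> ^ j"
  have "(\<Sum>P\<in>perm_tuples k n. exp (real (tail_weight d k n P)))
      = (\<Prod>\<alpha>\<in>{2..n}. \<Sum>v\<in>{1..k} \<rightarrow>\<^sub>E {1..\<alpha>}. exp (of_bool (d (card {\<beta>\<in>{1..k}. v \<beta> = 1}) = 1)))"
    unfolding exp_tail_weight_eq_prod by (rule sum_prod_rec_count_eq) (use n in simp)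
  also have "\<dots> \<le> (\<Prod>\<alpha>\<in>{2..n}. real \<alpha> ^ k * exp ((exp 1 - 1) * ?q \<alpha>))"
    using sum_exp_of_bool_le[where d = d, OF d0] by (intro prod_mono) (auto intro: sum_nonneg)
  also have "\<dots> = fact n ^ k * exp ((exp 1 - 1) * (\<Sum>\<alpha>=2..n. ?q \<alpha>))"
    by (simp add: prod.distrib prod_power_eq_fact exp_sum sum_distrib_left)
  also have "\<dots> \<le> fact n ^ k * exp ((exp 1 - 1) * tail_mean_bound d k n)"
    using sum_record_probabilities_le[OF k n, of d]
    by (intro mult_left_mono exp_mono mult_left_mono) (auto simp: one_le_exp_iff)
  finally show ?thesis .
qed

lemma card_ge_le_exp_markov:
  fixes f :: "'a \<Rightarrow> real"
  assumes "finite A"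
  shows "real (card {x\<in>A. t \<le> f x}) \<le> exp (- t) * (\<Sum>x\<in>A. exp (f x))"
proof -
  have "real (card {x\<in>A. t \<le> f x}) * exp t = (\<Sum>x\<in>{x\<in>A. t \<le> f x}. exp t)"
    by simp
  also have "\<dots> \<le> (\<Sum>x\<in>A. exp (f x))"
    using assms by (intro order_trans[OF sum_mono sum_mono2]) auto
  finally show ?thesis by (simp add: exp_minus field_simps)
qed

lemma card_tail_weight_ge_le:
  assumes "d 0 \<noteq> 1" and "k \<ge> 1" and "n \<ge> 2"
  shows "real (card {P\<in>perm_tuples k n. t \<le> real (tail_weight d k n P)})
    \<le> fact n ^ k * exp ((exp 1 - 1) * tail_mean_bound d k n - t)"
proof -
  have "real (card {P\<in>perm_tuples k n. t \<le> real (tail_weight d k n P)})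
      \<le> exp (- t) * (\<Sum>P\<in>perm_tuples k n. exp (real (tail_weight d k n P)))"
    by (rule card_ge_le_exp_markov[OF finite_perm_tuples])
  also have "\<dots> \<le> exp (- t) * (fact n ^ k * exp ((exp 1 - 1) * tail_mean_bound d k n))"
    by (intro mult_left_mono sum_exp_tail_weight_le[where d = d, OF assms]) simp
  also have "\<dots> = fact n ^ k * exp ((exp 1 - 1) * tail_mean_bound d k n - t)"
    by (simp add: exp_diff exp_minus divide_inverse mult_ac)
  finally show ?thesis .
qed

lemma weight_eq_tail_weight:
  assumes "n \<ge> 1"
  shows "weight c k n P = of_bool (c k = 1) + tail_weight c k n P"
proof -
  let ?A = "{\<alpha>\<in>{2..n}. c (rec_count k P \<alpha>) = 1}"
  have "seq_opt_set c k n P = {\<alpha>\<in>{1}. c (rec_count k P \<alpha>) = 1} \<union> ?A"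
    using assms unfolding seq_opt_set_def by auto
  moreover have "{\<alpha>\<in>{1}. c (rec_count k P \<alpha>) = 1} = (if c k = 1 then {1} else {})"
    using rec_count_first[of k P] by auto
  ultimately show ?thesis unfolding weight_def tail_weight_def by (simp add: card_Un_disjoint)
qed

lemma tail_weight_complement:
  assumes "\<forall>i\<le>k. c i \<in> {0, 1}"
  shows "tail_weight (\<lambda>i. 1 - c i) k n P + tail_weight c k n P = n - 1"
proof -
  let ?A = "{\<alpha>\<in>{2..n}. c (rec_count k P \<alpha>) = 1}"
  have zero_or_one: "c (rec_count k P \<alpha>) = 0 \<or> c (rec_count k P \<alpha>) = 1" for \<alpha>
    using assms rec_count_le[of k P \<alpha>] by blast
  have "1 - c (rec_count k P \<alpha>) = 1 \<longleftrightarrow> c (rec_count k P \<alpha>) \<noteq> 1" for \<alpha>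
    using zero_or_one[of \<alpha>] by auto
  then have "{\<alpha>\<in>{2..n}. 1 - c (rec_count k P \<alpha>) = 1} = {2..n} - ?A" by blast
  moreover have "card ({2..n} - ?A) = card {2..n} - card ?A" by (rule card_Diff_subset) auto
  moreover have "card ?A \<le> card {2..n}" by (rule card_mono) auto
  ultimately show ?thesis unfolding tail_weight_def by simp
qed

definition weight_threshold :: "(nat \<Rightarrow> nat) \<Rightarrow> nat \<Rightarrow> nat \<Rightarrow> nat \<Rightarrow> int" where
  "weight_threshold d k n M1 = \<lceil>exp 1 * k * d 1 * (ln (real n - 1) + euler_mascheroni)
     + exp 1 * pi\<^sup>2 / 6 * (\<Sum>\<beta>=2..k. real (d \<beta>) * real (k choose \<beta>))\<rceil> + int M1"

lemma weight_threshold_ge: "exp 1 * tail_mean_bound d k n + M1 \<le> weight_threshold d k n M1"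
proof -
  have "exp 1 * tail_mean_bound d k n = exp 1 * k * d 1 * (ln (real n - 1) + euler_mascheroni)
     + exp 1 * pi\<^sup>2 / 6 * (\<Sum>\<beta>=2..k. real (d \<beta>) * real (k choose \<beta>))"
    unfolding tail_mean_bound_def by (simp add: algebra_simps)
  then show ?thesis unfolding weight_threshold_def by linarith
qed

lemma sum_P_O_le_exp:
  assumes d0: "d 0 \<noteq> 1" and k: "k \<ge> 1" and n: "n \<ge> 2" and "finite I"
    and event: "\<And>P. P \<in> perm_tuples k n \<Longrightarrow> int (weight c k n P) + 1 - int (c k) \<in> I
      \<Longrightarrow> weight_threshold d k n M1 \<le> int (tail_weight d k n P)"
  shows "(\<Sum>m\<in>I. P_O c k n (m + int (c k) - 1)) \<le> exp (- real M1)"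
proof -
  let ?A = "\<lambda>m. {P\<in>perm_tuples k n. int (weight c k n P) = m + int (c k) - 1}"
  let ?t = "exp 1 * tail_mean_bound d k n + M1"
  have "card (\<Union>m\<in>I. ?A m) = (\<Sum>m\<in>I. card (?A m))"
    using \<open>finite I\<close> finite_perm_tuples by (intro card_UN_disjoint) auto
  then have sum_eq: "(\<Sum>m\<in>I. P_O c k n (m + int (c k) - 1)) = real (card (\<Union>m\<in>I. ?A m)) / fact n ^ k"
    unfolding P_O_def O_C_def by (simp add: sum_divide_distrib)
  have "(\<Union>m\<in>I. ?A m) \<subseteq> {P\<in>perm_tuples k n. ?t \<le> real (tail_weight d k n P)}"
    using event weight_threshold_ge[of d k n M1] by fastforce
  then have "real (card (\<Union>m\<in>I. ?A m)) \<le> real (card {P\<in>perm_tuples k n. ?t \<le> real (tail_weight d k n P)})"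
    using finite_perm_tuples by (simp add: card_mono)
  also have "\<dots> \<le> fact n ^ k * exp ((exp 1 - 1) * tail_mean_bound d k n - ?t)"
    by (rule card_tail_weight_ge_le[where d = d, OF d0 k n])
  also have "\<dots> \<le> fact n ^ k * exp (- real M1)"
    \<comment> \<open>only here is the factor \<open>e\<close> of the thresholds used, and \<open>e - 1\<close> would suffice\<close>
    using tail_mean_bound_nonneg[OF n, of d k] by (simp add: algebra_simps)
  finally show ?thesis unfolding sum_eq by (simp add: divide_le_eq mult.commute)
qed

theorem theorem5p2:
  fixes n k M1 :: nat and c :: "nat \<Rightarrow> nat"
  assumes "n \<ge> 2" and "k \<ge> 1" and "M1 \<ge> 1"
    and "\<forall>i\<le>k. c i \<in> {0, 1}"
  shows "(c 0 = 0 \<longrightarrow>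
      (let M = \<lceil>exp 1 * k * c 1 * (ln (real n - 1) + euler_mascheroni)
               + exp 1 * pi\<^sup>2 / 6 * (\<Sum>\<beta>=2..k. real (c \<beta>) * real (k choose \<beta>))\<rceil> + int M1
       in (\<Sum>m\<in>{M+1..int n}. P_O c k n (m + int (c k) - 1)) \<le> exp (- real M1)))
    \<and> (c 0 = 1 \<longrightarrow>
      (let c' = (\<lambda>i. 1 - c i);
           M' = \<lceil>exp 1 * k * c' 1 * (ln (real n - 1) + euler_mascheroni)
               + exp 1 * pi\<^sup>2 / 6 * (\<Sum>\<beta>=2..k. real (c' \<beta>) * real (k choose \<beta>))\<rceil> + int M1
       in (\<Sum>m\<in>{m. 1 \<le> m \<and> m < int n + 1 - M'}. P_O c k n (m + int (c k) - 1)) \<le> exp (- real M1)))"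
proof -
  have weight: "int (weight c k n P) = int (c k) + int (tail_weight c k n P)" for P
    using weight_eq_tail_weight[of n c k P] assms(1,4) by auto
  show ?thesis
  proof (intro conjI impI, goal_cases)
    case 1
    have "(\<Sum>m\<in>{weight_threshold c k n M1 + 1..int n}. P_O c k n (m + int (c k) - 1)) \<le> exp (- real M1)"
    proof (rule sum_P_O_le_exp)
      fix P assume "int (weight c k n P) + 1 - int (c k) \<in> {weight_threshold c k n M1 + 1..int n}"
      then show "weight_threshold c k n M1 \<le> int (tail_weight c k n P)" using weight[of P] by simp
    qed (use assms 1 in auto)
    then show ?case unfolding Let_def weight_threshold_def .
  next
    case 2
    let ?M' = "weight_threshold (\<lambda>i. 1 - c i) k n M1"
    have "(\<Sum>m\<in>{m. 1 \<le> m \<and> m < int n + 1 - ?M'}. P_O c k n (m + int (c k) - 1)) \<le> exp (- real M1)"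
    proof (rule sum_P_O_le_exp)
      show "finite {m. 1 \<le> m \<and> m < int n + 1 - ?M'}"
        by (rule finite_subset[of _ "{1..<int n + 1 - ?M'}"]) auto
      fix P assume "int (weight c k n P) + 1 - int (c k) \<in> {m. 1 \<le> m \<and> m < int n + 1 - ?M'}"
      then show "?M' \<le> int (tail_weight (\<lambda>i. 1 - c i) k n P)"
        using weight[of P] tail_weight_complement[OF assms(4), of n P] assms(1) by simp
    qed (use assms 2 in auto)
    then show ?case unfolding Let_def weight_threshold_def .
  qed
qed

end
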